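(* Let $k\ge1$ be an integer, $p_{\max}\in(0,1)$ and $\lambda_k>0$. Let items $X_i\sim\operatorname{Ber}(p_i,s_i)$ with $s_i\in\left(\frac{1}{k+1},\frac1k\right]$, $p_i\in(0,p_{\max}]$ and $\frac{1}{\lambda_k}\ln\frac{1}{1-p_i}\le1$ be packed, in order, by an Any-Fit algorithm applied to the real values $\frac{1}{\lambda_k}\ln\frac{1}{1-p_i}$ (bins of capacity 1), producing bins $\mathcal{B}_1,\dots,\mathcal{B}_m$ with $m\ge2$. Then $\frac1m\sum_{j=1}^m\sum_{i\in\mathcal{B}_j}p_is_i>\frac{\lambda_k(1-p_{\max})}{2(k+1)}$.
   Context: $X\sim\operatorname{Ber}(p,s)$ means $X=s$ with probability $p$ and $0$ otherwise. An Any-Fit algorithm processes real values in $[0,1]$ one by one, keeps every bin's total at most $1$, and opens a new bin only if the current value fits into no already opened bin. *)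

theory Defs
  imports Complex_Main
begin

text \<open>Items are indexed 0,...,n-1 and processed in this order.  v i is the real
value of item i; b i is the (label of the) bin item i is put into.  Bins are the
non-empty classes of b on {..<n}.\<close>

definition bin_load_before :: "(nat \<Rightarrow> real) \<Rightarrow> (nat \<Rightarrow> nat) \<Rightarrow> nat \<Rightarrow> nat \<Rightarrow> real" where
  "bin_load_before v b j i = (\<Sum>l\<in>{l. l < i \<and> b l = j}. v l)"

definition any_fit :: "nat \<Rightarrow> (nat \<Rightarrow> real) \<Rightarrow> (nat \<Rightarrow> nat) \<Rightarrow> bool" where
  "any_fit n v b \<longleftrightarrow>
     (\<forall>i<n.
        (b i \<in> b ` {..<i} \<longrightarrow> bin_load_before v b (b i) i + v i \<le> 1) \<and>
        (b i \<notin> b ` {..<i} \<longrightarrow> v i \<le> 1 \<and>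
             (\<forall>j\<in>b ` {..<i}. bin_load_before v b j i + v i > 1)))"

end

theory Submission
  imports Defs
begin

text \<open>Write v i = ln (1 / (1 - p i)) / lam for the packed value of item i.  Since
ln (1 / (1 - p)) \<le> p / (1 - p), every item has weight p i * s i at least
c * v i with c = lam (1 - pmax) / (k + 1).  In an Any-Fit packing any two bins have
total value above 1: the first item of the later-opened bin did not fit into the
earlier one.  Averaging this over all pairs of the m bins shows that the total value
exceeds m / 2, so the average weight per bin exceeds c / 2.\<close>

lemma one_minus_mult_ln_inverse_le:
  fixes p :: real
  assumes "0 \<le> p" "p < 1"
  shows "(1 - p) * ln (1 / (1 - p)) \<le> p"
proof -
  have "ln (1 / (1 - p)) \<le> 1 / (1 - p) - 1"
    using assms by (intro ln_le_minus_one) simp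
  then have "(1 - p) * ln (1 / (1 - p)) \<le> (1 - p) * (1 / (1 - p) - 1)"
    using assms by (intro mult_left_mono) auto
  also have "\<dots> = p"
    using assms by (simp add: field_simps)
  finally show ?thesis .
qed

lemma scaled_ln_inverse_le_weight:
  fixes p s lam pmax :: real and k :: nat
  assumes "lam > 0" "0 \<le> p" "p \<le> pmax" "pmax < 1" "1 / real (k + 1) < s"
  shows "lam * (1 - pmax) / real (k + 1) * ((1 / lam) * ln (1 / (1 - p))) \<le> p * s"
proof -
  have ln_nonneg: "0 \<le> ln (1 / (1 - p))"
    using assms by simp
  have "(1 - pmax) * ln (1 / (1 - p)) \<le> (1 - p) * ln (1 / (1 - p))"
    using assms ln_nonneg by (intro mult_right_mono) auto
  also have "\<dots> \<le> p"
    using assms by (intro one_minus_mult_ln_inverse_le) auto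
  finally have "(1 - pmax) * ln (1 / (1 - p)) * (1 / real (k + 1)) \<le> p * s"
    using assms by (intro mult_mono) auto
  then show ?thesis
    using assms by simp
qed

lemma any_fit_opening_item_overflows:
  fixes v :: "nat \<Rightarrow> real" and b :: "nat \<Rightarrow> nat"
  assumes af: "any_fit n v b" and nonneg: "\<And>i. i < n \<Longrightarrow> 0 \<le> v i"
    and "g < n" and opens: "b g \<notin> b ` {..<g}" and "f < g"
  shows "(\<Sum>i\<in>{i. i < n \<and> b i = b f}. v i) + (\<Sum>i\<in>{i. i < n \<and> b i = b g}. v i) > 1"
proof -
  have "bin_load_before v b (b f) g + v g > 1"
    using af \<open>g < n\<close> opens \<open>f < g\<close> unfolding any_fit_def by blast
  moreover have "bin_load_before v b (b f) g \<le> (\<Sum>i\<in>{i. i < n \<and> b i = b f}. v i)"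
    unfolding bin_load_before_def using \<open>g < n\<close> nonneg by (intro sum_mono2) auto
  moreover have "v g \<le> (\<Sum>i\<in>{i. i < n \<and> b i = b g}. v i)"
    using \<open>g < n\<close> nonneg by (intro member_le_sum) auto
  ultimately show ?thesis
    by linarith
qed

lemma any_fit_two_bins_overfull:
  fixes v :: "nat \<Rightarrow> real" and b :: "nat \<Rightarrow> nat"
  assumes af: "any_fit n v b" and nonneg: "\<And>i. i < n \<Longrightarrow> 0 \<le> v i"
    and "j \<in> b ` {..<n}" "j' \<in> b ` {..<n}" "j \<noteq> j'"
  shows "(\<Sum>i\<in>{i. i < n \<and> b i = j}. v i) + (\<Sum>i\<in>{i. i < n \<and> b i = j'}. v i) > 1"
proof -
  have first_item: "\<exists>f<n. b f = l \<and> l \<notin> b ` {..<f}" if "l \<in> b ` {..<n}" for l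
  proof -
    have "\<exists>i. i < n \<and> b i = l"
      using that by auto
    then obtain f where f: "f < n" "b f = l" and least: "\<forall>i<f. \<not> (i < n \<and> b i = l)"
      unfolding exists_least_iff[of "\<lambda>i. i < n \<and> b i = l"] by blast
    then have "l \<notin> b ` {..<f}"
      by fastforce
    then show ?thesis
      using f by blast
  qed
  obtain f where f: "f < n" "b f = j" "j \<notin> b ` {..<f}"
    using first_item[OF \<open>j \<in> b ` {..<n}\<close>] by blast
  obtain g where g: "g < n" "b g = j'" "j' \<notin> b ` {..<g}"
    using first_item[OF \<open>j' \<in> b ` {..<n}\<close>] by blast
  have "f \<noteq> g"
    using f g \<open>j \<noteq> j'\<close> by auto
  then consider "f < g" | "g < f"
    by linarith
  then show ?thesis
  proof cases
    case 1
    then show ?thesis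
      using any_fit_opening_item_overflows[OF af nonneg \<open>g < n\<close> _ 1] f g by simp
  next
    case 2
    then show ?thesis
      using any_fit_opening_item_overflows[OF af nonneg \<open>f < n\<close> _ 2] f g by simp
  qed
qed

lemma sum_offdiagonal_pairs:
  fixes L :: "'a \<Rightarrow> real"
  assumes "finite B"
  shows "(\<Sum>j\<in>B. \<Sum>j'\<in>B - {j}. L j + L j') = 2 * (real (card B) - 1) * sum L B"
proof -
  have inner: "(\<Sum>j'\<in>B - {j}. L j + L j') = (real (card B) - 2) * L j + sum L B"
    if "j \<in> B" for j
  proof -
    have "card B \<ge> 1"
      using assms that by (auto simp: Suc_le_eq card_gt_0_iff)
    then have card_eq: "real (card (B - {j})) = real (card B) - 1"
      using assms that by (simp add: of_nat_diff)
    have sum_eq: "sum L (B - {j}) = sum L B - L j"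
      using assms that by (simp add: sum_diff1)
    have "(\<Sum>j'\<in>B - {j}. L j + L j') = real (card (B - {j})) * L j + sum L (B - {j})"
      by (simp add: sum.distrib)
    also have "\<dots> = (real (card B) - 2) * L j + sum L B"
      unfolding card_eq sum_eq by (simp add: algebra_simps)
    finally show ?thesis .
  qed
  have "(\<Sum>j\<in>B. \<Sum>j'\<in>B - {j}. L j + L j')
        = (\<Sum>j\<in>B. (real (card B) - 2) * L j + sum L B)"
    using inner by (rule sum.cong[OF refl])
  also have "\<dots> = (real (card B) - 2) * sum L B + real (card B) * sum L B"
    by (simp add: sum.distrib flip: sum_distrib_left)
  also have "\<dots> = 2 * (real (card B) - 1) * sum L B"
    by (simp add: algebra_simps)
  finally show ?thesis .
qed

lemma pairwise_sum_gt_one_imp_sum_gt_half_card: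
  fixes L :: "'a \<Rightarrow> real"
  assumes "finite B" "card B \<ge> 2"
    and pair: "\<And>j j'. j \<in> B \<Longrightarrow> j' \<in> B \<Longrightarrow> j \<noteq> j' \<Longrightarrow> L j + L j' > 1"
  shows "2 * sum L B > real (card B)"
proof -
  have "B - {j} \<noteq> {}" if "j \<in> B" for j
  proof
    assume "B - {j} = {}"
    then have "card B \<le> card {j}"
      by (intro card_mono) auto
    then show False
      using \<open>card B \<ge> 2\<close> by simp
  qed
  then have "(\<Sum>j\<in>B. \<Sum>j'\<in>B - {j}. (1::real)) < (\<Sum>j\<in>B. \<Sum>j'\<in>B - {j}. L j + L j')"
    using assms by (intro sum_strict_mono) auto
  moreover have "(\<Sum>j\<in>B. \<Sum>j'\<in>B - {j}. (1::real)) = real (card B) * (real (card B) - 1)"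
    using assms by (simp add: of_nat_diff)
  ultimately have "(real (card B) - 1) * real (card B) < (real (card B) - 1) * (2 * sum L B)"
    using sum_offdiagonal_pairs[OF \<open>finite B\<close>, of L] by (simp add: algebra_simps)
  then show ?thesis
    using \<open>card B \<ge> 2\<close> by (simp add: mult_less_cancel_left_pos)
qed

theorem lemma9:
  fixes k :: nat and pmax lam :: real and n :: nat
    and p s :: "nat \<Rightarrow> real" and b :: "nat \<Rightarrow> nat"
  assumes "k \<ge> 1" and "0 < pmax" and "pmax < 1" and "lam > 0"
    and "\<And>i. i < n \<Longrightarrow> 1 / real (k + 1) < s i \<and> s i \<le> 1 / real k"
    and "\<And>i. i < n \<Longrightarrow> 0 < p i \<and> p i \<le> pmax"
    and "\<And>i. i < n \<Longrightarrow> (1 / lam) * ln (1 / (1 - p i)) \<le> 1"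
    and "any_fit n (\<lambda>i. (1 / lam) * ln (1 / (1 - p i))) b"
    and "m = card (b ` {..<n})"
    and "m \<ge> 2"
  shows "(1 / real m) * (\<Sum>j\<in>b ` {..<n}. \<Sum>i\<in>{i. i < n \<and> b i = j}. p i * s i)
           > lam * (1 - pmax) / (2 * real (k + 1))"
proof -
  define v where "v = (\<lambda>i. (1 / lam) * ln (1 / (1 - p i)))"
  define c where "c = lam * (1 - pmax) / real (k + 1)"
  define L where "L j = (\<Sum>i\<in>{i. i < n \<and> b i = j}. v i)" for j
  have nonneg: "0 \<le> v i" if "i < n" for i
    using assms(3,4) assms(6)[OF that] unfolding v_def by simp
  have pair: "L j + L j' > 1" if "j \<in> b ` {..<n}" "j' \<in> b ` {..<n}" "j \<noteq> j'" for j j'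
    using any_fit_two_bins_overfull[OF assms(8)[folded v_def] nonneg that] unfolding L_def .
  have "2 * sum L (b ` {..<n}) > real m"
    using pairwise_sum_gt_one_imp_sum_gt_half_card[of "b ` {..<n}" L] pair assms(9,10) by simp
  moreover have "c > 0"
    using assms(3,4) by (simp add: c_def)
  ultimately have "c * real m / 2 < c * sum L (b ` {..<n})"
    by simp
  also have "\<dots> \<le> (\<Sum>j\<in>b ` {..<n}. \<Sum>i\<in>{i. i < n \<and> b i = j}. p i * s i)"
    using assms(3-6) unfolding L_def v_def c_def sum_distrib_left
    by (intro sum_mono scaled_ln_inverse_le_weight) (auto simp: less_imp_le)
  finally show ?thesis
    using assms(10) by (simp add: c_def field_simps)
qed

end
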